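(* Let $B^n$ be the open unit ball of $\mathbb{R}^n$ and let $u:B^n\to\mathbb{R}$ be a bounded function such that $u-\|\cdot\|^2/a$ is concave on $B^n$ for some $a>0$. Then for each compactly supported non-negative $C^2$ function $g:B^n\to\mathbb{R}$, the product $gu$, extended by zero outside of $B^n$, is semi-concave on $\mathbb{R}^n$.
   Context: A function $w:\mathbb{R}^n\to\mathbb{R}$ is semi-concave if there is $k>0$ such that $x\mapsto w(x)-\|x\|^2/k$ is concave on $\mathbb{R}^n$. *)

theory Defs
  imports "HOL-Analysis.Analysis"
begin

definition semi_concave :: "('a::euclidean_space \<Rightarrow> real) \<Rightarrow> bool" where
  "semi_concave w \<longleftrightarrow> (\<exists>k>0. concave_on UNIV (\<lambda>x. w x - (norm x)^2 / k))"

definition C2_on :: "'a::euclidean_space set \<Rightarrow> ('a \<Rightarrow> real) \<Rightarrow> bool" where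
  "C2_on S g \<longleftrightarrow> (\<exists>(g' :: 'a \<Rightarrow> ('a \<Rightarrow>\<^sub>L real)) (g'' :: 'a \<Rightarrow> ('a \<Rightarrow>\<^sub>L ('a \<Rightarrow>\<^sub>L real))).
      (\<forall>x\<in>S. (g has_derivative blinfun_apply (g' x)) (at x)) \<and>
      (\<forall>x\<in>S. (g' has_derivative blinfun_apply (g'' x)) (at x)) \<and>
      continuous_on S g'')"

end

theory Submission
  imports Defs
begin

text \<open>
  Near the support of \<open>g\<close>, the function \<open>u\<close> has at every point a quadratic supergradient
  (from a supporting hyperplane of the concave function \<open>u - \<parallel>x\<parallel>\<^sup>2/a\<close>) whose norm is bounded in
  terms of \<open>sup \<bar>u\<bar>\<close> and the distance to the boundary sphere. Multiplying it by the second
  order Taylor expansion of \<open>g \<ge> 0\<close> gives, at every point \<open>x\<close>, a linear \<open>L\<close> with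
  \<open>g u (y) \<le> g u (x) + L (y - x) + C \<parallel>y - x\<parallel>\<^sup>2\<close> for \<open>\<parallel>y - x\<parallel> < \<delta>\<close>, with \<open>C\<close> and \<open>\<parallel>L\<parallel>\<close> uniform;
  away from the support the extension vanishes identically. Since \<open>g u\<close> is bounded, the
  quadratic term dominates when \<open>\<parallel>y - x\<parallel> \<ge> \<delta>\<close>, so the bound holds globally with a larger \<open>C\<close>.
  Then \<open>g u - C \<parallel>x\<parallel>\<^sup>2\<close> has a supporting affine function at every point and is concave.
\<close>

lemma concave_on_UNIV_if_linear_support:
  fixes h :: "'a::real_vector \<Rightarrow> real"
  assumes "\<And>x. \<exists>L. linear L \<and> (\<forall>y. h y \<le> h x + L (y - x))"
  shows "concave_on UNIV h"
  unfolding concave_on_iff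
proof (intro conjI ballI allI impI)
  fix x y :: 'a and s t :: real
  assume st: "s \<ge> 0" "t \<ge> 0" "s + t = 1"
  define z where "z = s *\<^sub>R x + t *\<^sub>R y"
  obtain L where L: "linear L" "\<forall>y. h y \<le> h z + L (y - z)"
    using assms by blast
  have "s * h x + t * h y \<le> s * (h z + L (x - z)) + t * (h z + L (y - z))"
    using L(2) st by (intro add_mono mult_left_mono) auto
  also have "\<dots> = (s + t) * h z + L (s *\<^sub>R x + t *\<^sub>R y) - (s + t) * L z"
    using L(1) by (simp add: linear_diff linear_add linear_scale algebra_simps)
  also have "\<dots> = h z"
    using st(3) by (simp add: z_def)
  finally show "s * h x + t * h y \<le> h (s *\<^sub>R x + t *\<^sub>R y)"
    by (simp add: z_def)
qed simp

lemma semi_concave_if_quadratic_upper_bound: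
  fixes F :: "'a::euclidean_space \<Rightarrow> real"
  assumes "C > 0"
    and bound: "\<And>x. \<exists>L. linear L \<and> (\<forall>y. F y \<le> F x + L (y - x) + C * (norm (y - x))\<^sup>2)"
  shows "semi_concave F"
  unfolding semi_concave_def
proof (intro exI[of _ "1 / C"] conjI)
  have "concave_on UNIV (\<lambda>x. F x - C * (norm x)\<^sup>2)"
  proof (rule concave_on_UNIV_if_linear_support)
    fix x
    obtain L where L: "linear L" "\<forall>y. F y \<le> F x + L (y - x) + C * (norm (y - x))\<^sup>2"
      using bound by blast
    have "linear (\<lambda>d. L d - 2 * C * (x \<bullet> d))"
      using L(1) by (intro linearI) (auto simp: linear_add linear_scale inner_add_right algebra_simps)
    moreover have "F y - C * (norm y)\<^sup>2 \<le> F x - C * (norm x)\<^sup>2 + (L (y - x) - 2 * C * (x \<bullet> (y - x)))" for y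
    proof -
      have "C * (norm (y - x))\<^sup>2 = C * (norm y)\<^sup>2 - 2 * C * (x \<bullet> (y - x)) - C * (norm x)\<^sup>2"
        by (simp add: power2_norm_eq_inner inner_diff_left inner_diff_right inner_commute algebra_simps)
      then show ?thesis
        using L(2)[rule_format, of y] by linarith
    qed
    ultimately show "\<exists>L. linear L \<and> (\<forall>y. F y - C * (norm y)\<^sup>2 \<le> F x - C * (norm x)\<^sup>2 + L (y - x))"
      by blast
  qed
  then show "concave_on UNIV (\<lambda>x. F x - (norm x)\<^sup>2 / (1 / C))"
    by (simp add: mult.commute)
qed (use assms in simp)

lemma semi_concave_if_bounded_and_locally_semi_concave:
  fixes F :: "'a::euclidean_space \<Rightarrow> real"
  assumes "\<delta> > 0" and bdd: "\<And>x. \<bar>F x\<bar> \<le> B"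
    and local: "\<And>x. \<exists>L. linear L \<and> (\<forall>d. \<bar>L d\<bar> \<le> \<Lambda> * norm d) \<and>
                  (\<forall>y\<in>ball x \<delta>. F y \<le> F x + L (y - x) + C * (norm (y - x))\<^sup>2)"
  shows "semi_concave F"
proof (rule semi_concave_if_quadratic_upper_bound)
  define K where "K = 2 * B / \<delta>\<^sup>2 + \<bar>\<Lambda>\<bar> / \<delta> + \<bar>C\<bar> + 1"
  have "0 \<le> B" using bdd[of 0] by simp
  then have K: "2 * B / \<delta>\<^sup>2 \<ge> 0" "\<bar>\<Lambda>\<bar> / \<delta> \<ge> 0"
    using \<open>\<delta> > 0\<close> by simp_all
  then show "K > 0" by (simp add: K_def)
  fix x
  obtain L where L: "linear L" "\<And>d. \<bar>L d\<bar> \<le> \<Lambda> * norm d"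
    and near: "\<forall>y\<in>ball x \<delta>. F y \<le> F x + L (y - x) + C * (norm (y - x))\<^sup>2"
    using local by blast
  have "F y \<le> F x + L (y - x) + K * (norm (y - x))\<^sup>2" for y
  proof (cases "norm (y - x) < \<delta>")
    case True
    then have "y \<in> ball x \<delta>"
      by (simp add: dist_norm norm_minus_commute)
    then have "F y \<le> F x + L (y - x) + C * (norm (y - x))\<^sup>2"
      using near by blast
    also have "C * (norm (y - x))\<^sup>2 \<le> K * (norm (y - x))\<^sup>2"
      using K by (intro mult_right_mono) (auto simp: K_def)
    finally show ?thesis by simp
  next
    case False
    define r where "r = norm (y - x)"
    have "\<delta> \<le> r" using False by (simp add: r_def)
    have "2 * B = 2 * B / \<delta>\<^sup>2 * \<delta>\<^sup>2" using \<open>\<delta> > 0\<close> by simp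
    also have "\<dots> \<le> 2 * B / \<delta>\<^sup>2 * r\<^sup>2"
      using K \<open>\<delta> \<le> r\<close> \<open>\<delta> > 0\<close> by (intro mult_left_mono power_mono) auto
    finally have "2 * B \<le> 2 * B / \<delta>\<^sup>2 * r\<^sup>2" .
    moreover have "\<bar>\<Lambda>\<bar> * r \<le> \<bar>\<Lambda>\<bar> / \<delta> * r\<^sup>2"
      using \<open>\<delta> \<le> r\<close> \<open>\<delta> > 0\<close> by (simp add: field_simps power2_eq_square mult_right_mono)
    moreover have "- L (y - x) \<le> \<bar>\<Lambda>\<bar> * r"
      using L(2)[of "y - x"] mult_right_mono[OF abs_ge_self[of \<Lambda>], of r] by (simp add: r_def abs_le_iff)
    moreover have "K * r\<^sup>2 = 2 * B / \<delta>\<^sup>2 * r\<^sup>2 + \<bar>\<Lambda>\<bar> / \<delta> * r\<^sup>2 + (\<bar>C\<bar> + 1) * r\<^sup>2"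
      by (simp add: K_def algebra_simps)
    moreover have "(\<bar>C\<bar> + 1) * r\<^sup>2 \<ge> 0" by simp
    ultimately have "F y - F x - L (y - x) \<le> K * r\<^sup>2"
      using bdd[of x] bdd[of y] unfolding abs_le_iff by linarith
    then show ?thesis by (simp add: r_def)
  qed
  then show "\<exists>L. linear L \<and> (\<forall>y. F y \<le> F x + L (y - x) + K * (norm (y - x))\<^sup>2)"
    using L(1) by blast
qed

lemma convex_strict_hypograph:
  assumes "concave_on S c"
  shows "convex {(y, t). y \<in> S \<and> t < c y}"
  unfolding convex_def
proof (clarsimp)
  fix y1 t1 y2 t2 and s t :: real
  assume h: "y1 \<in> S" "t1 < c y1" "y2 \<in> S" "t2 < c y2" and st: "0 \<le> s" "0 \<le> t" "s + t = 1"
  have "s * t1 + t * t2 < s * c y1 + t * c y2"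
  proof (cases "s = 0")
    case False
    then show ?thesis
      using h st by (intro add_less_le_mono mult_strict_left_mono mult_left_mono) auto
  qed (use h st in simp)
  also have "\<dots> \<le> c (s *\<^sub>R y1 + t *\<^sub>R y2)"
    using assms h st by (simp add: concave_on_iff)
  finally show "s *\<^sub>R y1 + t *\<^sub>R y2 \<in> S \<and> s * t1 + t * t2 < c (s *\<^sub>R y1 + t *\<^sub>R y2)"
    using assms h st by (simp add: concave_on_iff convex_def)
qed

lemma concave_on_open_has_supergradient:
  fixes c :: "'a::euclidean_space \<Rightarrow> real"
  assumes conc: "concave_on S c" and "open S" and x: "x \<in> S"
  shows "\<exists>q. \<forall>y\<in>S. c y \<le> c x + q \<bullet> (y - x)"
proof -
  define H where "H = {(y, t). y \<in> S \<and> t < c y}"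
  have "(x, c x - 1) \<in> H" "(x, c x) \<notin> H"
    using x by (auto simp: H_def)
  then obtain w b where "w \<noteq> 0" "\<forall>z\<in>H. w \<bullet> z \<le> b" "b \<le> w \<bullet> (x, c x)"
    using separating_hyperplane_sets[OF convex_strict_hypograph[OF conc] convex_singleton, of "(x, c x)"]
    unfolding H_def by blast
  moreover obtain p \<beta> where w: "w = (p, \<beta>)" by fastforce
  ultimately have nonzero: "(p, \<beta>) \<noteq> 0"
    and sep: "\<And>y t. y \<in> S \<Longrightarrow> t < c y \<Longrightarrow> p \<bullet> y + \<beta> * t \<le> p \<bullet> x + \<beta> * c x"
    by (fastforce simp: H_def)+
  have "\<beta> \<ge> 0"
    using sep[OF x, of "c x - 1"] by (simp add: algebra_simps)
  moreover have "\<beta> \<noteq> 0"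
  proof
    assume "\<beta> = 0"
    then have "p \<noteq> 0" using nonzero by (simp add: zero_prod_def)
    obtain e where e: "e > 0" "ball x e \<subseteq> S"
      using \<open>open S\<close> x open_contains_ball by blast
    define y where "y = x + (e / 2 / norm p) *\<^sub>R p"
    have "y \<in> S"
      using e \<open>p \<noteq> 0\<close> by (intro subsetD[OF e(2)]) (simp add: y_def dist_norm)
    then have "p \<bullet> y \<le> p \<bullet> x"
      using sep[of y "c y - 1"] \<open>\<beta> = 0\<close> by simp
    moreover have "p \<bullet> y = p \<bullet> x + e / 2 * norm p"
      using \<open>p \<noteq> 0\<close> by (simp add: y_def inner_add_right power2_norm_eq_inner[symmetric] power2_eq_square)
    ultimately show False
      using e \<open>p \<noteq> 0\<close> by (simp add: mult_le_0_iff)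
  qed
  ultimately have "\<beta> > 0" by simp
  have "c y \<le> c x + (- (1 / \<beta>) *\<^sub>R p) \<bullet> (y - x)" if "y \<in> S" for y
  proof (rule field_le_epsilon)
    fix \<epsilon> :: real assume "\<epsilon> > 0"
    have "p \<bullet> y + \<beta> * (c y - \<epsilon>) \<le> p \<bullet> x + \<beta> * c x"
      using sep[OF that] \<open>\<epsilon> > 0\<close> by simp
    then show "c y \<le> c x + (- (1 / \<beta>) *\<^sub>R p) \<bullet> (y - x) + \<epsilon>"
      using \<open>\<beta> > 0\<close> \<open>\<epsilon> > 0\<close> by (simp add: inner_diff_right field_simps)
  qed
  then show ?thesis by blast
qed

lemma quadratic_supergradient_if_concave_minus_square:
  fixes u :: "'a::euclidean_space \<Rightarrow> real"
  assumes "concave_on S (\<lambda>x. u x - (norm x)\<^sup>2 / a)" and "open S" and "x \<in> S"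
  shows "\<exists>q. \<forall>y\<in>S. u y \<le> u x + q \<bullet> (y - x) + (norm (y - x))\<^sup>2 / a"
proof -
  obtain q where q: "\<forall>y\<in>S. u y - (norm y)\<^sup>2 / a \<le> u x - (norm x)\<^sup>2 / a + q \<bullet> (y - x)"
    using concave_on_open_has_supergradient[OF assms] by blast
  have sq: "(norm y)\<^sup>2 / a = (norm x)\<^sup>2 / a + ((2 / a) *\<^sub>R x) \<bullet> (y - x) + (norm (y - x))\<^sup>2 / a" for y
    by (simp add: power2_norm_eq_inner inner_diff_left inner_diff_right inner_commute
        add_divide_distrib diff_divide_distrib algebra_simps)
  then have "u y \<le> u x + (q + (2 / a) *\<^sub>R x) \<bullet> (y - x) + (norm (y - x))\<^sup>2 / a" if "y \<in> S" for y
    unfolding inner_add_left using q[rule_format, OF that] sq[of y] by linarith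
  then show ?thesis by blast
qed

lemma quadratic_supergradient_norm_le:
  fixes u :: "'a::real_inner \<Rightarrow> real"
  assumes "\<delta> > 0" and "a > 0"
    and sg: "\<forall>y\<in>cball x \<delta>. u y \<le> u x + q \<bullet> (y - x) + (norm (y - x))\<^sup>2 / a"
    and bdd: "\<forall>y\<in>cball x \<delta>. \<bar>u y\<bar> \<le> M"
  shows "norm q \<le> 2 * M / \<delta> + \<delta> / a"
proof (cases "q = 0")
  case True
  then show ?thesis
    using bdd[rule_format, of x] \<open>\<delta> > 0\<close> \<open>a > 0\<close> by simp
next
  case False
  define y where "y = x - (\<delta> / norm q) *\<^sub>R q"
  have y: "y \<in> cball x \<delta>" "norm (y - x) = \<delta>" "q \<bullet> (y - x) = - \<delta> * norm q"
    using False \<open>\<delta> > 0\<close>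
    by (simp_all add: y_def dist_norm inner_diff_right power2_norm_eq_inner[symmetric] power2_eq_square)
  have "\<delta> * norm q \<le> 2 * M + \<delta>\<^sup>2 / a"
    using sg[rule_format, OF y(1)] bdd[rule_format, OF y(1)] bdd[rule_format, of x] y \<open>\<delta> > 0\<close>
    by (simp add: abs_le_iff)
  then show ?thesis
    using \<open>\<delta> > 0\<close> by (simp add: field_simps power2_eq_square)
qed

lemma bounded_quadratic_supergradient:
  fixes u :: "'a::euclidean_space \<Rightarrow> real"
  assumes "concave_on S (\<lambda>x. u x - (norm x)\<^sup>2 / a)" and "open S" and "a > 0"
    and "\<delta> > 0" and "cball x \<delta> \<subseteq> S" and u_bdd: "\<And>y. y \<in> S \<Longrightarrow> \<bar>u y\<bar> \<le> M"
  obtains q where "norm q \<le> 2 * M / \<delta> + \<delta> / a"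
    and "\<And>y. y \<in> S \<Longrightarrow> u y \<le> u x + q \<bullet> (y - x) + (norm (y - x))\<^sup>2 / a"
proof -
  have "x \<in> S"
    using \<open>\<delta> > 0\<close> \<open>cball x \<delta> \<subseteq> S\<close> by (meson centre_in_cball less_imp_le subsetD)
  then obtain q where q: "\<forall>y\<in>S. u y \<le> u x + q \<bullet> (y - x) + (norm (y - x))\<^sup>2 / a"
    using quadratic_supergradient_if_concave_minus_square[OF assms(1,2)] by blast
  moreover have "norm q \<le> 2 * M / \<delta> + \<delta> / a"
    using \<open>cball x \<delta> \<subseteq> S\<close> q u_bdd
    by (intro quadratic_supergradient_norm_le[OF \<open>\<delta> > 0\<close> \<open>a > 0\<close>]) auto
  ultimately show thesis
    using that by blast
qed

lemma compact_subset_ball_subset_cball: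
  fixes K :: "'a::real_normed_vector set"
  assumes "compact K" and "K \<subseteq> ball 0 r"
  obtains R where "R < r" "K \<subseteq> cball 0 R"
proof (cases "K = {}")
  case True
  then show ?thesis
    using that[of "r - 1"] by simp
next
  case False
  obtain k where "k \<in> K" "\<forall>z\<in>K. norm z \<le> norm k"
    using compact_attains_sup[of "norm ` K"] \<open>compact K\<close> False
    by (auto intro: compact_continuous_image continuous_intros)
  then show ?thesis
    using that[of "norm k"] assms by (auto simp: subset_iff)
qed

lemma linearization_error_le:
  fixes f :: "'a::real_normed_vector \<Rightarrow> 'b::real_normed_vector"
  assumes "convex T" and "x \<in> T" and "y \<in> T" and "0 \<le> L"
    and deriv: "\<And>z. z \<in> T \<Longrightarrow> (f has_derivative blinfun_apply (f' z)) (at z within T)"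
    and lip: "\<And>z. z \<in> T \<Longrightarrow> norm (f' z - f' x) \<le> L * norm (z - x)"
  shows "norm (f y - f x - f' x (y - x)) \<le> L * (norm (y - x))\<^sup>2"
proof -
  have seg: "closed_segment x y \<subseteq> T"
    using assms by (simp add: closed_segment_subset)
  have "norm (f y - f x - f' x (y - x)) \<le> norm (y - x) * (L * norm (y - x))"
  proof (rule differentiable_bound_linearization[where S = "closed_segment x y"])
    show "x + t *\<^sub>R (y - x) \<in> closed_segment x y" if "t \<in> {0..1}" for t
      using that unfolding closed_segment_def by (auto intro!: exI[of _ t] simp: algebra_simps)
    show "(f has_derivative blinfun_apply (f' z)) (at z within closed_segment x y)"
      if "z \<in> closed_segment x y" for z
      using deriv seg that by (blast intro: has_derivative_subset)
    show "onorm (blinfun_apply (f' z) - blinfun_apply (f' x)) \<le> L * norm (y - x)"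
      if "z \<in> closed_segment x y" for z
    proof -
      have "onorm (blinfun_apply (f' z) - blinfun_apply (f' x)) = norm (f' z - f' x)"
        by (simp add: norm_blinfun.rep_eq blinfun.diff_left[abs_def] fun_diff_def)
      also have "\<dots> \<le> L * norm (z - x)"
        using lip seg that by blast
      also have "\<dots> \<le> L * norm (y - x)"
        using segment_bound1[OF that] \<open>0 \<le> L\<close> by (simp add: mult_left_mono)
      finally show ?thesis .
    qed
  qed simp
  then show ?thesis
    by (simp add: power2_eq_square mult.commute mult.left_commute)
qed

lemma C2_on_taylor_bounds:
  fixes g :: "'a::euclidean_space \<Rightarrow> real"
  assumes "C2_on S g" and "compact T" and "convex T" and "T \<subseteq> S"
  obtains G G1 G2 :: real and Dg :: "'a \<Rightarrow> 'a \<Rightarrow> real" where "0 \<le> G" "0 \<le> G1" "0 \<le> G2"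
    and "\<And>x. x \<in> T \<Longrightarrow> \<bar>g x\<bar> \<le> G"
    and "\<And>x. x \<in> T \<Longrightarrow> linear (Dg x)"
    and "\<And>x d. x \<in> T \<Longrightarrow> \<bar>Dg x d\<bar> \<le> G1 * norm d"
    and "\<And>x y. x \<in> T \<Longrightarrow> y \<in> T \<Longrightarrow> \<bar>g y - g x\<bar> \<le> G1 * norm (y - x)"
    and "\<And>x y. x \<in> T \<Longrightarrow> y \<in> T \<Longrightarrow> \<bar>g y - g x - Dg x (y - x)\<bar> \<le> G2 * (norm (y - x))\<^sup>2"
proof -
  obtain g' :: "'a \<Rightarrow> 'a \<Rightarrow>\<^sub>L real" and g'' where
    d1: "\<And>x. x \<in> S \<Longrightarrow> (g has_derivative blinfun_apply (g' x)) (at x)"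
    and d2: "\<And>x. x \<in> S \<Longrightarrow> (g' has_derivative blinfun_apply (g'' x)) (at x)"
    and "continuous_on S g''"
    using \<open>C2_on S g\<close> unfolding C2_on_def by blast
  have d1T: "(g has_derivative blinfun_apply (g' x)) (at x within T)" if "x \<in> T" for x
    using d1 \<open>T \<subseteq> S\<close> that by (blast intro: has_derivative_at_withinI)
  have d2T: "(g' has_derivative blinfun_apply (g'' x)) (at x within T)" if "x \<in> T" for x
    using d2 \<open>T \<subseteq> S\<close> that by (blast intro: has_derivative_at_withinI)
  have "continuous_on T g" "continuous_on T g'" "continuous_on T g''"
    using has_derivative_continuous_on[OF d1T] has_derivative_continuous_on[OF d2T]
      continuous_on_subset[OF \<open>continuous_on S g''\<close> \<open>T \<subseteq> S\<close>] by auto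
  then have "bounded (g ` T)" "bounded (g' ` T)" "bounded (g'' ` T)"
    using \<open>compact T\<close> by (metis compact_imp_bounded compact_continuous_image)+
  then obtain G G1 G2 where G: "G > 0" "\<forall>x\<in>T. norm (g x) \<le> G"
    and G1: "G1 > 0" "\<forall>x\<in>T. norm (g' x) \<le> G1" and G2: "G2 > 0" "\<forall>x\<in>T. norm (g'' x) \<le> G2"
    unfolding bounded_pos by (meson imageI)
  have g'_lip: "norm (g' y - g' x) \<le> G2 * norm (y - x)" if "x \<in> T" "y \<in> T" for x y
    using differentiable_bound[OF \<open>convex T\<close> d2T _ that(2,1)] G2(2)
    by (simp add: norm_blinfun.rep_eq[symmetric])
  show thesis
  proof (rule that[of G G1 G2 "\<lambda>x. blinfun_apply (g' x)"])
    show "\<bar>g y - g x\<bar> \<le> G1 * norm (y - x)" if "x \<in> T" "y \<in> T" for x y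
      using differentiable_bound[OF \<open>convex T\<close> d1T _ that(2,1)] G1(2)
      by (simp add: norm_blinfun.rep_eq[symmetric])
    show "\<bar>g y - g x - g' x (y - x)\<bar> \<le> G2 * (norm (y - x))\<^sup>2" if "x \<in> T" "y \<in> T" for x y
      using linearization_error_le[OF \<open>convex T\<close> that _ d1T g'_lip[OF that(1)]] G2(1) by simp
    show "\<bar>g' x d\<bar> \<le> G1 * norm d" if "x \<in> T" for x d
      using norm_blinfun[of "g' x" d] mult_right_mono[OF G1(2)[rule_format, OF that] norm_ge_zero[of d]]
      by simp
    show "linear (blinfun_apply (g' x))" for x
      by (rule bounded_linear.linear[OF blinfun.bounded_linear_right])
  qed (use G G1 G2 in auto)
qed

lemma product_local_quadratic_upper_bound:
  fixes g u :: "'a::real_inner \<Rightarrow> real"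
  assumes "a > 0" and "x \<in> T" and "linear Dg" and Dg_bdd: "\<And>d. \<bar>Dg d\<bar> \<le> G1 * norm d"
    and "\<bar>u x\<bar> \<le> M" and "norm q \<le> Q"
    and g_nonneg: "\<And>y. y \<in> T \<Longrightarrow> 0 \<le> g y" and g_bdd: "\<And>y. y \<in> T \<Longrightarrow> \<bar>g y\<bar> \<le> G"
    and g_lip: "\<And>y. y \<in> T \<Longrightarrow> \<bar>g y - g x\<bar> \<le> G1 * norm (y - x)"
    and g_taylor: "\<And>y. y \<in> T \<Longrightarrow> \<bar>g y - g x - Dg (y - x)\<bar> \<le> G2 * (norm (y - x))\<^sup>2"
    and u_sup: "\<And>y. y \<in> T \<Longrightarrow> u y \<le> u x + q \<bullet> (y - x) + (norm (y - x))\<^sup>2 / a"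
  shows "\<exists>L. linear L \<and> (\<forall>d. \<bar>L d\<bar> \<le> (G * Q + M * G1) * norm d) \<and>
           (\<forall>y\<in>T. g y * u y \<le> g x * u x + L (y - x) + (G1 * Q + M * G2 + G / a) * (norm (y - x))\<^sup>2)"
proof (intro exI[of _ "\<lambda>d. g x * (q \<bullet> d) + u x * Dg d"] conjI allI ballI)
  have q_bdd: "\<bar>q \<bullet> d\<bar> \<le> Q * norm d" for d
    using Cauchy_Schwarz_ineq2[of q d] mult_right_mono[OF \<open>norm q \<le> Q\<close> norm_ge_zero[of d]] by linarith
  show "linear (\<lambda>d. g x * (q \<bullet> d) + u x * Dg d)"
    using \<open>linear Dg\<close> by (intro linearI) (simp_all add: linear_add linear_scale inner_add_right algebra_simps)
  show "\<bar>g x * (q \<bullet> d) + u x * Dg d\<bar> \<le> (G * Q + M * G1) * norm d" for d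
  proof -
    have "\<bar>g x\<bar> \<le> G" "0 \<le> G" "0 \<le> M"
      using g_bdd[OF \<open>x \<in> T\<close>] \<open>\<bar>u x\<bar> \<le> M\<close> by linarith+
    then have "\<bar>g x * (q \<bullet> d)\<bar> \<le> G * (Q * norm d)" "\<bar>u x * Dg d\<bar> \<le> M * (G1 * norm d)"
      unfolding abs_mult using assms q_bdd[of d] by (intro mult_mono; simp)+
    then show ?thesis by (simp add: algebra_simps)
  qed
  fix y assume "y \<in> T"
  define r where "r = norm (y - x)"
  note g = g_nonneg[OF \<open>y \<in> T\<close>] g_bdd[OF \<open>y \<in> T\<close>]
    g_lip[OF \<open>y \<in> T\<close>, folded r_def] g_taylor[OF \<open>y \<in> T\<close>, folded r_def]
  \<comment> \<open>With \<open>d = y - x\<close>: \<open>g y (u x + q \<bullet> d + r\<^sup>2/a) - g x u x - L d = (g y - g x) (q \<bullet> d) + u x (g y - g x - Dg d) + g y r\<^sup>2/a\<close>.\<close>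
  have "\<bar>(g y - g x) * (q \<bullet> (y - x))\<bar> \<le> G1 * r * (Q * r)"
    unfolding abs_mult using g q_bdd[of "y - x"] by (intro mult_mono) (auto simp: r_def)
  moreover have "\<bar>u x * (g y - g x - Dg (y - x))\<bar> \<le> M * (G2 * r\<^sup>2)"
    unfolding abs_mult using g assms by (intro mult_mono) auto
  moreover have "g y * (r\<^sup>2 / a) \<le> G * (r\<^sup>2 / a)"
    using g \<open>a > 0\<close> by (intro mult_right_mono) auto
  moreover have "g y * u y \<le> g y * (u x + q \<bullet> (y - x) + r\<^sup>2 / a)"
    using u_sup[OF \<open>y \<in> T\<close>] g by (intro mult_left_mono) (auto simp: r_def)
  ultimately show "g y * u y \<le> g x * u x + (g x * (q \<bullet> (y - x)) + u x * Dg (y - x))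
                     + (G1 * Q + M * G2 + G / a) * (norm (y - x))\<^sup>2"
    by (simp add: r_def abs_le_iff algebra_simps power2_eq_square)
qed

lemma semi_concave_product_extension:
  fixes g u :: "'a::euclidean_space \<Rightarrow> real"
  assumes "open S" and "T \<subseteq> S" and "compact T" and "convex T" and "\<delta> > 0" and "a > 0"
    and conc: "concave_on S (\<lambda>x. u x - (norm x)\<^sup>2 / a)"
    and u_bdd: "\<And>x. x \<in> S \<Longrightarrow> \<bar>u x\<bar> \<le> M" and "0 \<le> M"
    and "C2_on S g" and g_nonneg: "\<And>x. x \<in> S \<Longrightarrow> 0 \<le> g x"
    and cover: "\<And>x. cball x \<delta> \<subseteq> T \<or> (\<forall>y\<in>cball x \<delta> \<inter> S. g y = 0)"
  shows "semi_concave (\<lambda>x. if x \<in> S then g x * u x else 0)"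
proof -
  obtain G G1 G2 Dg where "0 \<le> G" "0 \<le> G1" "0 \<le> G2"
    and g_bdd: "\<And>x. x \<in> T \<Longrightarrow> \<bar>g x\<bar> \<le> G"
    and Dg_linear: "\<And>x. x \<in> T \<Longrightarrow> linear (Dg x)"
    and Dg_bdd: "\<And>x d. x \<in> T \<Longrightarrow> \<bar>Dg x d\<bar> \<le> G1 * norm d"
    and g_lip: "\<And>x y. x \<in> T \<Longrightarrow> y \<in> T \<Longrightarrow> \<bar>g y - g x\<bar> \<le> G1 * norm (y - x)"
    and g_taylor: "\<And>x y. x \<in> T \<Longrightarrow> y \<in> T \<Longrightarrow> \<bar>g y - g x - Dg x (y - x)\<bar> \<le> G2 * (norm (y - x))\<^sup>2"
    using C2_on_taylor_bounds[OF \<open>C2_on S g\<close> \<open>compact T\<close> \<open>convex T\<close> \<open>T \<subseteq> S\<close>] by blast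
  define F where "F = (\<lambda>x. if x \<in> S then g x * u x else 0)"
  define Q where "Q = 2 * M / \<delta> + \<delta> / a"
  have "0 \<le> Q"
    using \<open>0 \<le> M\<close> \<open>\<delta> > 0\<close> \<open>a > 0\<close> by (simp add: Q_def)
  have g_nonneg_T: "\<And>x. x \<in> T \<Longrightarrow> 0 \<le> g x"
    using g_nonneg \<open>T \<subseteq> S\<close> by blast
  have "semi_concave F"
  proof (rule semi_concave_if_bounded_and_locally_semi_concave
      [of \<delta> F "G * M" "G * Q + M * G1" "G1 * Q + M * G2 + G / a"])
    show "\<bar>F x\<bar> \<le> G * M" for x
    proof (cases "x \<in> T")
      case True
      then have "\<bar>g x\<bar> \<le> G" "\<bar>u x\<bar> \<le> M" "x \<in> S"
        using g_bdd u_bdd \<open>T \<subseteq> S\<close> by auto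
      then show ?thesis
        by (simp add: F_def abs_mult mult_mono)
    next
      case False
      have "x \<in> cball x \<delta>"
        using \<open>\<delta> > 0\<close> by simp
      then have "F x = 0"
        using cover[of x] False unfolding F_def by (auto simp del: mem_cball centre_in_cball)
      then show ?thesis
        using \<open>0 \<le> G\<close> \<open>0 \<le> M\<close> by simp
    qed
    fix x
    show "\<exists>L. linear L \<and> (\<forall>d. \<bar>L d\<bar> \<le> (G * Q + M * G1) * norm d) \<and>
            (\<forall>y\<in>ball x \<delta>. F y \<le> F x + L (y - x) + (G1 * Q + M * G2 + G / a) * (norm (y - x))\<^sup>2)"
    proof (cases "cball x \<delta> \<subseteq> T")
      case True
      have "x \<in> cball x \<delta>"
        using \<open>\<delta> > 0\<close> by simp
      then have "x \<in> T" "x \<in> S" "ball x \<delta> \<subseteq> T" "cball x \<delta> \<subseteq> S"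
        using True ball_subset_cball[of x \<delta>] \<open>T \<subseteq> S\<close> by blast+
      obtain q where "norm q \<le> Q" and q: "\<And>y. y \<in> S \<Longrightarrow> u y \<le> u x + q \<bullet> (y - x) + (norm (y - x))\<^sup>2 / a"
        using bounded_quadratic_supergradient[OF conc \<open>open S\<close> \<open>a > 0\<close> \<open>\<delta> > 0\<close> \<open>cball x \<delta> \<subseteq> S\<close> u_bdd]
        unfolding Q_def by blast
      obtain L where "linear L" "\<forall>d. \<bar>L d\<bar> \<le> (G * Q + M * G1) * norm d"
        and L: "\<forall>y\<in>T. g y * u y \<le> g x * u x + L (y - x) + (G1 * Q + M * G2 + G / a) * (norm (y - x))\<^sup>2"
        using product_local_quadratic_upper_bound[OF \<open>a > 0\<close> \<open>x \<in> T\<close> Dg_linear[OF \<open>x \<in> T\<close>]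
            Dg_bdd[OF \<open>x \<in> T\<close>] u_bdd[OF \<open>x \<in> S\<close>] \<open>norm q \<le> Q\<close> g_nonneg_T g_bdd
            g_lip[OF \<open>x \<in> T\<close>] g_taylor[OF \<open>x \<in> T\<close>] q[OF subsetD[OF \<open>T \<subseteq> S\<close>]]]
        by blast
      moreover have "F y = g y * u y" if "y \<in> ball x \<delta>" for y
        using that \<open>ball x \<delta> \<subseteq> T\<close> \<open>T \<subseteq> S\<close> by (auto simp: F_def)
      ultimately show ?thesis
        using \<open>ball x \<delta> \<subseteq> T\<close> \<open>x \<in> S\<close> by (intro exI[of _ L]) (auto simp: F_def)
    next
      case False
      then have "F y = 0" if "y \<in> cball x \<delta>" for y
        using cover[of x] that by (auto simp: F_def)
      then show ?thesis
        using \<open>\<delta> > 0\<close> \<open>a > 0\<close> \<open>0 \<le> G\<close> \<open>0 \<le> G1\<close> \<open>0 \<le> G2\<close> \<open>0 \<le> M\<close> \<open>0 \<le> Q\<close>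
        by (intro exI[of _ "\<lambda>_. 0"]) (auto simp: linear_zero)
    qed
  qed (rule \<open>\<delta> > 0\<close>)
  then show ?thesis
    by (simp add: F_def)
qed

theorem lemma5:
  fixes u g :: "'a::euclidean_space \<Rightarrow> real"
  assumes u_bounded: "bounded (u ` ball 0 1)"
    and u_sc: "\<exists>a>0. concave_on (ball 0 1) (\<lambda>x. u x - (norm x)^2 / a)"
    and g_C2: "C2_on (ball 0 1) g"
    and g_nonneg: "\<forall>x\<in>ball 0 1. g x \<ge> 0"
    and g_supp: "\<exists>K. compact K \<and> K \<subseteq> ball 0 1 \<and> (\<forall>x\<in>ball 0 1 - K. g x = 0)"
  shows "semi_concave (\<lambda>x. if x \<in> ball 0 1 then g x * u x else 0)"
proof -
  obtain a where "a > 0" and conc: "concave_on (ball 0 1) (\<lambda>x. u x - (norm x)\<^sup>2 / a)"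
    using u_sc by blast
  obtain M where M: "\<And>x. x \<in> ball 0 1 \<Longrightarrow> \<bar>u x\<bar> \<le> M"
    using u_bounded unfolding bounded_iff by (metis image_eqI real_norm_def)
  obtain K R0 where "R0 < 1" "K \<subseteq> cball 0 R0" and g_zero: "\<forall>x\<in>ball 0 1 - K. g x = 0"
    using g_supp compact_subset_ball_subset_cball by metis
  define \<delta> where "\<delta> = (1 - R0) / 3"
  define T where "T = cball (0::'a) (R0 + 2 * \<delta>)"
  have "\<delta> > 0" "R0 + 2 * \<delta> < 1"
    using \<open>R0 < 1\<close> by (simp_all add: \<delta>_def field_simps)
  then have "T \<subseteq> ball 0 1" "compact T" "convex T"
    by (auto simp: T_def)
  have cover: "cball x \<delta> \<subseteq> T \<or> (\<forall>y\<in>cball x \<delta> \<inter> ball 0 1. g y = 0)" for x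
  proof (cases "norm x \<le> R0 + \<delta>")
    case True
    then show ?thesis
      unfolding T_def cball_subset_cball_iff by simp
  next
    case False
    then have "y \<notin> K" if "y \<in> cball x \<delta>" for y
      using that \<open>K \<subseteq> cball 0 R0\<close> norm_triangle_ineq2[of x y] by (auto simp: dist_norm)
    then show ?thesis
      using g_zero by blast
  qed
  have "0 \<le> M"
    using M[of 0] by simp
  show ?thesis
    using semi_concave_product_extension[OF open_ball \<open>T \<subseteq> ball 0 1\<close> \<open>compact T\<close> \<open>convex T\<close>
        \<open>\<delta> > 0\<close> \<open>a > 0\<close> conc M \<open>0 \<le> M\<close> g_C2 _ cover] g_nonneg by blast
qed

end
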